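(* Let $G_3^*$ be the set of positive integers $k$ such that every exponent occurring in the prime factorization of $k$ (i.e. $v_p(k)$ for every prime $p \mid k$) belongs to $A_3^*$, where $A_3^*$ is the set of nonnegative integers whose base-$3$ expansion contains no digit $2$. Then the upper uniform density of $G_3^*$ satisfies $\overline{u}(G_3^* ) \le 7/8$.
   Context: $A_3^*$ is the greedy set of nonnegative integers free of 3-term arithmetic progressions, and $G_3^*$ (by Rankin's characterization) is the greedy set of positive integers free of 3-term geometric progressions $a, ar, ar^2$ with integer ratio $r>1$. For $A\subseteq \mathbb{N}$, the upper uniform density is $\overline{u}(A) = \lim_{s\to\infty} \max_{n\ge 0} \frac{1}{s}\,\#\{a\in A : n < a \le n+s\}$. *)

theory Defs
  imports "HOL-Analysis.Analysis" "HOL-Computational_Algebra.Primes"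
begin

definition A3star :: "nat set" where
  "A3star = {n. \<forall>i::nat. (n div 3 ^ i) mod 3 \<noteq> 2}"

definition G3star :: "nat set" where
  "G3star = {k. k > 0 \<and> (\<forall>p. prime p \<and> p dvd k \<longrightarrow> multiplicity p k \<in> A3star)}"

definition window_max :: "nat set \<Rightarrow> nat \<Rightarrow> nat" where
  "window_max A s = (SUP n. card {a \<in> A. n < a \<and> a \<le> n + s})"

definition upper_uniform_density :: "nat set \<Rightarrow> real" where
  "upper_uniform_density A = lim (\<lambda>s. real (window_max A s) / real s)"

end

theory Submission
  imports Defs
begin

text \<open>Every block of eight consecutive integers contains a number \<open>4m\<close> with \<open>m\<close> odd; its
  2-adic valuation is 2, which is not in \<open>A\<^sub>3\<^sup>*\<close>, so at most 7 of any 8 consecutive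
  integers lie in \<open>G\<^sub>3\<^sup>*\<close>. Window counts are subadditive, hence by Fekete's lemma
  \<open>window_max A s / s\<close> converges to its infimum, which is at most \<open>7/8\<close>.\<close>

lemma two_notin_A3star: "2 \<notin> A3star"
  unfolding A3star_def by (auto intro: exI[of _ 0])

lemma multiplicity_two_four_times_odd:
  assumes "odd m"
  shows "multiplicity (2::nat) (4 * m) = 2"
proof -
  have "multiplicity (2::nat) (2 ^ 2 * m) = multiplicity (2::nat) (2 ^ 2) + multiplicity 2 m"
    using assms by (intro prime_elem_multiplicity_mult_distrib) (auto intro: odd_pos)
  moreover have "multiplicity (2::nat) (2 ^ 2) = 2"
    by (rule multiplicity_prime_power) simp
  moreover have "multiplicity (2::nat) m = 0"
    using assms by (intro not_dvd_imp_multiplicity_0) auto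
  ultimately show ?thesis by simp
qed

lemma four_times_odd_notin_G3star:
  assumes "odd m"
  shows "4 * m \<notin> G3star"
  using two_notin_A3star multiplicity_two_four_times_odd[OF assms]
  unfolding G3star_def by (auto dest!: spec[of _ 2])

lemma card_window_le:
  fixes A :: "nat set"
  shows "card {a \<in> A. n < a \<and> a \<le> n + s} \<le> s"
proof -
  have "card {a \<in> A. n < a \<and> a \<le> n + s} \<le> card {n<..n + s}"
    by (rule card_mono) auto
  then show ?thesis by simp
qed

lemma card_window_le_window_max:
  fixes A :: "nat set"
  shows "card {a \<in> A. n < a \<and> a \<le> n + s} \<le> window_max A s"
  unfolding window_max_def
  by (rule cSUP_upper) (auto intro!: bdd_aboveI[of _ s] card_window_le)

lemma window_max_le:
  fixes A :: "nat set"
  shows "window_max A s \<le> s"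
  unfolding window_max_def by (rule cSUP_least) (auto simp: card_window_le)

lemma window_max_add_le:
  fixes A :: "nat set"
  shows "window_max A (s + t) \<le> window_max A s + window_max A t"
  unfolding window_max_def[of A "s + t"]
proof (rule cSUP_least)
  fix n
  let ?W = "\<lambda>n s. {a \<in> A. n < a \<and> a \<le> n + s}"
  have "card (?W n (s + t)) \<le> card (?W n s \<union> ?W (n + s) t)"
    by (rule card_mono) auto
  also have "\<dots> \<le> card (?W n s) + card (?W (n + s) t)"
    by (rule card_Un_le)
  also have "\<dots> \<le> window_max A s + window_max A t"
    by (intro add_mono card_window_le_window_max)
  finally show "card (?W n (s + t)) \<le> window_max A s + window_max A t" .
qed simp

lemma window_max_G3star_8: "window_max G3star 8 \<le> 7"
  unfolding window_max_def
proof (rule cSUP_least)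
  fix n :: nat
  define k where "k = 4 * (2 * ((n + 4) div 8) + 1)"
  have k: "n < k" "k \<le> n + 8"
    unfolding k_def by presburger+
  have "{a \<in> G3star. n < a \<and> a \<le> n + 8} \<subseteq> {n<..n + 8} - {k}"
    using four_times_odd_notin_G3star[of "2 * ((n + 4) div 8) + 1"] unfolding k_def by auto
  then have "card {a \<in> G3star. n < a \<and> a \<le> n + 8} \<le> card ({n<..n + 8} - {k})"
    by (rule card_mono[rotated]) simp
  also have "\<dots> = 7"
    using k by (simp add: card_Diff_singleton)
  finally show "card {a \<in> G3star. n < a \<and> a \<le> n + 8} \<le> 7" .
qed simp

lemma subadditive_le_multiple:
  fixes a :: "nat \<Rightarrow> nat"
  assumes sub: "\<And>s t. a (s + t) \<le> a s + a t" and bd: "\<And>s. a s \<le> s"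
  shows "a (q * m + r) \<le> q * a m + r"
proof (induction q)
  case 0
  then show ?case using bd[of r] by simp
next
  case (Suc q)
  have "a (Suc q * m + r) \<le> a m + a (q * m + r)"
    using sub[of m "q * m + r"] by (simp add: add.assoc)
  then show ?case using Suc by simp
qed

lemma subadditive_ratio_le:
  fixes a :: "nat \<Rightarrow> nat"
  assumes sub: "\<And>s t. a (s + t) \<le> a s + a t" and bd: "\<And>s. a s \<le> s"
    and "m \<ge> 1" and "s \<ge> 1"
  shows "real (a s) / real s \<le> real (a m) / real m + real m / real s"
proof -
  have "a s \<le> (s div m) * a m + s mod m"
    using subadditive_le_multiple[OF sub bd, of "s div m" m "s mod m"] by simp
  moreover have "s mod m \<le> m"
    using \<open>m \<ge> 1\<close> by (simp add: less_imp_le)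
  ultimately have "real (a s) \<le> real (s div m) * real (a m) + real m"
    by (metis add_left_mono of_nat_add of_nat_le_iff of_nat_mult order_trans)
  also have "\<dots> \<le> real s / real m * real (a m) + real m"
    by (intro add_right_mono mult_right_mono of_nat_div_le_of_nat) simp
  finally have "real (a s) \<le> real s * (real (a m) / real m) + real m"
    by simp
  then show ?thesis
    using \<open>s \<ge> 1\<close> by (simp add: field_simps)
qed

lemma fekete:
  fixes a :: "nat \<Rightarrow> nat"
  assumes sub: "\<And>s t. a (s + t) \<le> a s + a t" and bd: "\<And>s. a s \<le> s"
  shows "(\<lambda>s. real (a s) / real s) \<longlonglongrightarrow> (INF m\<in>{1..}. real (a m) / real m)"
proof (rule LIMSEQ_I)
  let ?L = "INF m\<in>{1..}. real (a m) / real m"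
  fix e :: real
  assume "e > 0"
  have bdd: "bdd_below ((\<lambda>m. real (a m) / real m) ` {1..})"
    by (rule bdd_belowI[of _ 0]) auto
  obtain m where m: "m \<ge> 1" "real (a m) / real m < ?L + e / 2"
    using cInf_lessD[of "(\<lambda>m. real (a m) / real m) ` {1..}" "?L + e / 2"] \<open>e > 0\<close> by auto
  obtain N :: nat where N: "real N > 2 * real m / e"
    using reals_Archimedean2 by blast
  show "\<exists>N. \<forall>s\<ge>N. norm (real (a s) / real s - ?L) < e"
  proof (intro exI[of _ "N + 1"] allI impI)
    fix s
    assume "N + 1 \<le> s"
    then have "s \<ge> 1" and "2 * real m / e < real s"
      using N by linarith+
    then have "real m / real s < e / 2"
      using \<open>e > 0\<close> by (simp add: field_simps)
    then have "real (a s) / real s < ?L + e"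
      using subadditive_ratio_le[OF sub bd m(1) \<open>s \<ge> 1\<close>] m(2) by linarith
    moreover have "?L \<le> real (a s) / real s"
      using \<open>s \<ge> 1\<close> by (intro cINF_lower[OF bdd]) auto
    ultimately show "norm (real (a s) / real s - ?L) < e"
      by simp
  qed
qed

theorem mainTheorem1:
  shows "upper_uniform_density G3star \<le> 7 / 8"
proof -
  let ?a = "window_max G3star"
  have "upper_uniform_density G3star = (INF m\<in>{1..}. real (?a m) / real m)"
    unfolding upper_uniform_density_def
    by (intro limI fekete window_max_add_le window_max_le)
  also have "\<dots> \<le> real (?a 8) / real 8"
    by (rule cINF_lower) (auto intro!: bdd_belowI[of _ 0])
  also have "\<dots> \<le> 7 / 8"
    using window_max_G3star_8 by simp
  finally show ?thesis .
qed

end
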